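(* For $n\ge1$, $$\sum_{\pi\in\mathfrak{S}_n(213)}t^{\mathsf{des}\,\pi}q^{\mathsf{adi}\,\pi}=\sum_{\pi\in\mathfrak{S}_n(132)}t^{\mathsf{des}\,\pi}q^{\mathsf{adi}^*\,\pi}=\sum_{k=0}^{\lfloor (n-1)/2\rfloor}\Big(\sum_{\pi\in\widetilde{\mathfrak{S}}_{n,k}(213)}q^{\mathsf{adi}\,\pi}\Big)t^k(1+t)^{n-1-2k}=\sum_{k=0}^{\lfloor (n-1)/2\rfloor}\Big(\sum_{\pi\in\widetilde{\mathfrak{S}}_{n,k}(132)}q^{\mathsf{adi}^*\,\pi}\Big)t^k(1+t)^{n-1-2k}.$$
   Context: $\mathfrak{S}_n(\tau)$: permutations of $[n]$ avoiding the classical pattern $\tau$. $\mathsf{des}\,\pi=\#\{i\in[n-1]:\pi(i)>\pi(i+1)\}$. Admissible inversions: set $\pi(n+1)=0$; an inversion pair $(\pi(i),\pi(j))$ ($1\le i<j\le n$, $\pi(i)>\pi(j)$) is admissible if $\pi(j)<\pi(j+1)$ or there is $l$ with $i<l<j$ and $\pi(l)<\pi(j)$; $\mathsf{adi}\,\pi$ counts them. Star admissible: set $\pi(0)=n+1$; an inversion pair $(\pi(i),\pi(j))$ with $i<j$ is star admissible if $\pi(i-1)<\pi(i)$ or there is $l$ with $i<l<j$ and $\pi(l)>\pi(i)$; $\mathsf{adi}^*\,\pi$ counts them. $\mathsf{dd}\,\pi$ is the number of $i\in[n]$ with $\pi(i-1)>\pi(i)>\pi(i+1)$ under $\pi(0)=\pi(n+1)=0$;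 $\mathsf{dd}^*\,\pi$ is the same with $\pi(0)=\pi(n+1)=n+1$. $\widetilde{\mathfrak{S}}_{n,k}(213)=\{\pi\in\mathfrak{S}_n(213):\mathsf{dd}\,\pi=0,\mathsf{des}\,\pi=k\}$, $\widetilde{\mathfrak{S}}_{n,k}(132)=\{\pi\in\mathfrak{S}_n(132):\mathsf{dd}^*\,\pi=0,\mathsf{des}\,\pi=k\}$. *)

theory Defs
  imports "HOL-Combinatorics.Permutations"
begin

text \<open>Permutations of [n] are functions p with p permutes {1..n}; p i is the value at position i.\<close>

definition contains_pattern :: "nat list \<Rightarrow> nat \<Rightarrow> (nat \<Rightarrow> nat) \<Rightarrow> bool" where
  "contains_pattern pat n p \<longleftrightarrow>
     (\<exists>idx :: nat \<Rightarrow> nat. strict_mono_on {0..<length pat} idx \<and>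
        (\<forall>k<length pat. idx k \<in> {1..n}) \<and>
        (\<forall>a<length pat. \<forall>b<length pat. (pat ! a < pat ! b \<longleftrightarrow> p (idx a) < p (idx b))))"

definition avoiders :: "nat \<Rightarrow> nat list \<Rightarrow> (nat \<Rightarrow> nat) set" where
  "avoiders n pat = {p. p permutes {1..n} \<and> \<not> contains_pattern pat n p}"

definition des :: "nat \<Rightarrow> (nat \<Rightarrow> nat) \<Rightarrow> nat" where
  "des n p = card {i \<in> {1..<n}. p i > p (i+1)}"

definition ext :: "nat \<Rightarrow> nat \<Rightarrow> nat \<Rightarrow> (nat \<Rightarrow> nat) \<Rightarrow> nat \<Rightarrow> nat" where
  "ext a b n p j = (if j = 0 then a else if j = n + 1 then b else p j)"

definition adi :: "nat \<Rightarrow> (nat \<Rightarrow> nat) \<Rightarrow> nat" where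
  "adi n p = card {(i, j). 1 \<le> i \<and> i < j \<and> j \<le> n \<and> p i > p j \<and>
      (ext 0 0 n p j < ext 0 0 n p (j+1) \<or> (\<exists>l. i < l \<and> l < j \<and> p l < p j))}"

definition adi_star :: "nat \<Rightarrow> (nat \<Rightarrow> nat) \<Rightarrow> nat" where
  "adi_star n p = card {(i, j). 1 \<le> i \<and> i < j \<and> j \<le> n \<and> p i > p j \<and>
      (ext (n+1) (n+1) n p (i-1) < ext (n+1) (n+1) n p i \<or> (\<exists>l. i < l \<and> l < j \<and> p l > p i))}"

definition dd :: "nat \<Rightarrow> (nat \<Rightarrow> nat) \<Rightarrow> nat" where
  "dd n p = card {i \<in> {1..n}. ext 0 0 n p (i-1) > ext 0 0 n p i \<and> ext 0 0 n p i > ext 0 0 n p (i+1)}"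

definition dd_star :: "nat \<Rightarrow> (nat \<Rightarrow> nat) \<Rightarrow> nat" where
  "dd_star n p = card {i \<in> {1..n}. ext (n+1) (n+1) n p (i-1) > ext (n+1) (n+1) n p i \<and>
      ext (n+1) (n+1) n p i > ext (n+1) (n+1) n p (i+1)}"

definition tilde213 :: "nat \<Rightarrow> nat \<Rightarrow> (nat \<Rightarrow> nat) set" where
  "tilde213 n k = {p \<in> avoiders n [2,1,3]. dd n p = 0 \<and> des n p = k}"

definition tilde132 :: "nat \<Rightarrow> nat \<Rightarrow> (nat \<Rightarrow> nat) set" where
  "tilde132 n k = {p \<in> avoiders n [1,3,2]. dd_star n p = 0 \<and> des n p = k}"

end

theory Submission
  imports Defs
begin

text \<open>Reversal combined with complementation maps 213-avoiders bijectively onto 132-avoiders,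
  keeps descents, and turns admissible inversions into star admissible ones and double descents into
  star double descents; this gives the first and the last identity.

  For the middle one, a 213-avoider of length a+b+1 is uniquely the entry 1 at position a+1,
  preceded by a 213-avoider on the a largest values and followed by a 213-avoider on the values
  2..b+1. Under this decomposition des, dd and adi are additive up to explicit corrections, so the
  (des, adi)-polynomial of 213-avoiders and the gamma-weighted sum on the right both satisfy
  F(n+1) = (1+t) F(n) + \<Sum>a=1..n-1. t q^(a(n-a)+a) F(a) F(n-a) with F(0) = F(1) = 1.\<close>

section \<open>Patterns of length three\<close>

lemma contains_pattern_length3:
  "contains_pattern [x, y, z] n p \<longleftrightarrow>
    (\<exists>i j k. 1 \<le> i \<and> i < j \<and> j < k \<and> k \<le> n \<and>
      (x < y \<longleftrightarrow> p i < p j) \<and> (y < x \<longleftrightarrow> p j < p i) \<and>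
      (x < z \<longleftrightarrow> p i < p k) \<and> (z < x \<longleftrightarrow> p k < p i) \<and>
      (y < z \<longleftrightarrow> p j < p k) \<and> (z < y \<longleftrightarrow> p k < p j))"
    (is "?lhs \<longleftrightarrow> ?rhs")
proof
  assume ?lhs
  then obtain idx where mono: "strict_mono_on {0..<3} idx" and range: "\<forall>k<3. idx k \<in> {1..n}"
    and order: "\<forall>a<3. \<forall>b<3. ([x, y, z] ! a < [x, y, z] ! b \<longleftrightarrow> p (idx a) < p (idx b))"
    unfolding contains_pattern_def by (auto simp: numeral_3_eq_3)
  have "idx 0 < idx 1" "idx 1 < idx 2"
    using mono by (simp_all add: strict_mono_on_def)
  moreover have "1 \<le> idx 0" "idx 2 \<le> n"
    using range by simp_all
  moreover note order[rule_format, of 0 1] order[rule_format, of 1 0] order[rule_format, of 0 2]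
    order[rule_format, of 2 0] order[rule_format, of 1 2] order[rule_format, of 2 1]
  ultimately show ?rhs
    by (intro exI[of _ "idx 0"] exI[of _ "idx 1"] exI[of _ "idx 2"]) simp
next
  assume ?rhs
  then obtain i j k where ijk: "1 \<le> i" "i < j" "j < k" "k \<le> n"
    and order: "(x < y \<longleftrightarrow> p i < p j)" "(y < x \<longleftrightarrow> p j < p i)" "(x < z \<longleftrightarrow> p i < p k)"
      "(z < x \<longleftrightarrow> p k < p i)" "(y < z \<longleftrightarrow> p j < p k)" "(z < y \<longleftrightarrow> p k < p j)"
    by blast
  let ?idx = "\<lambda>m::nat. if m = 0 then i else if m = 1 then j else k"
  have "strict_mono_on {0..<3} ?idx"
    using ijk by (auto simp: strict_mono_on_def numeral_3_eq_3 less_Suc_eq)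
  moreover have "\<forall>m<3. ?idx m \<in> {1..n}"
    using ijk by (simp add: numeral_3_eq_3 less_Suc_eq)
  moreover have "\<forall>a<3. \<forall>b<3. ([x, y, z] ! a < [x, y, z] ! b \<longleftrightarrow> p (?idx a) < p (?idx b))"
    using order by (simp add: numeral_3_eq_3 less_Suc_eq all_conj_distrib)
  ultimately show ?lhs
    unfolding contains_pattern_def by (intro exI[of _ ?idx]) (simp add: numeral_3_eq_3)
qed

lemma contains_213_iff:
  "contains_pattern [2,1,3] n p \<longleftrightarrow>
    (\<exists>i j k. 1 \<le> i \<and> i < j \<and> j < k \<and> k \<le> n \<and> p j < p i \<and> p i < p k)"
  unfolding contains_pattern_length3 by (intro ex_cong1) (auto dest: less_trans)

lemma contains_132_iff:
  "contains_pattern [1,3,2] n p \<longleftrightarrow>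
    (\<exists>i j k. 1 \<le> i \<and> i < j \<and> j < k \<and> k \<le> n \<and> p i < p k \<and> p k < p j)"
  unfolding contains_pattern_length3 by (intro ex_cong1) (auto dest: less_trans)

section \<open>Reverse complement\<close>

lemma card_eq_by_involution:
  assumes "A \<subseteq> D" "B \<subseteq> D"
    and "\<And>x. x \<in> D \<Longrightarrow> f x \<in> D" "\<And>x. x \<in> D \<Longrightarrow> f (f x) = x"
    and "\<And>x. x \<in> D \<Longrightarrow> x \<in> B \<longleftrightarrow> f x \<in> A"
  shows "card A = card B"
proof -
  have "bij_betw f B A"
  proof (rule bij_betw_byWitness[of _ f])
    show "\<forall>x\<in>B. f (f x) = x" "\<forall>y\<in>A. f (f y) = y"
      using assms(1,2,4) by blast+
    show "f ` B \<subseteq> A"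
      using assms(2,5) by blast
    show "f ` A \<subseteq> B"
    proof
      fix y assume "y \<in> f ` A"
      then obtain x where "x \<in> A" "y = f x" by blast
      then show "y \<in> B"
        using assms(1,3,4) assms(5)[of "f x"] by auto
    qed
  qed
  then show ?thesis
    by (simp add: bij_betw_same_card)
qed

lemma ex_between_reflect:
  assumes "j \<le> Suc n"
  shows "(\<exists>l. i < l \<and> l < j \<and> P (Suc n - l)) \<longleftrightarrow> (\<exists>l. Suc n - j < l \<and> l < Suc n - i \<and> P l)"
proof
  assume "\<exists>l. i < l \<and> l < j \<and> P (Suc n - l)"
  then obtain l where "i < l" "l < j" "P (Suc n - l)" by blast
  then show "\<exists>l. Suc n - j < l \<and> l < Suc n - i \<and> P l"
    using assms by (intro exI[of _ "Suc n - l"]) auto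
next
  assume "\<exists>l. Suc n - j < l \<and> l < Suc n - i \<and> P l"
  then obtain l where "Suc n - j < l" "l < Suc n - i" "P l" by blast
  then show "\<exists>l. i < l \<and> l < j \<and> P (Suc n - l)"
    by (intro exI[of _ "Suc n - l"]) auto
qed

definition mirror :: "nat \<Rightarrow> nat \<Rightarrow> nat" where
  "mirror n i = (if i \<in> {1..n} then Suc n - i else i)"

definition reverse_complement :: "nat \<Rightarrow> (nat \<Rightarrow> nat) \<Rightarrow> nat \<Rightarrow> nat" where
  "reverse_complement n p = mirror n \<circ> p \<circ> mirror n"

lemma mirror_mirror [simp]: "mirror n (mirror n i) = i"
  by (auto simp: mirror_def)

lemma mirror_permutes: "mirror n permutes {1..n}"
  by (rule bij_imp_permutes, rule bij_betw_byWitness[of _ "mirror n"]) (auto simp: mirror_def)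

lemma reverse_complement_permutes:
  "p permutes {1..n} \<Longrightarrow> reverse_complement n p permutes {1..n}"
  unfolding reverse_complement_def by (intro permutes_compose mirror_permutes)

lemma reverse_complement_involution [simp]:
  "reverse_complement n (reverse_complement n p) = p"
  by (simp add: reverse_complement_def fun_eq_iff)

context
  fixes n :: nat and p :: "nat \<Rightarrow> nat"
  assumes p: "p permutes {1..n}"
begin

lemma mirrored_value_bounds:
  "1 \<le> i \<Longrightarrow> i \<le> n \<Longrightarrow> 1 \<le> p (Suc n - i) \<and> p (Suc n - i) \<le> n"
  by (rule permutes_in_seg[OF p]) auto

lemma reverse_complement_apply:
  "1 \<le> i \<Longrightarrow> i \<le> n \<Longrightarrow> reverse_complement n p i = Suc n - p (Suc n - i)"
  using mirrored_value_bounds[of i] by (simp add: reverse_complement_def mirror_def)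

lemma reverse_complement_less_iff:
  assumes "1 \<le> a" "a \<le> n" "1 \<le> b" "b \<le> n"
  shows "reverse_complement n p a < reverse_complement n p b \<longleftrightarrow> p (Suc n - b) < p (Suc n - a)"
  using assms mirrored_value_bounds[of a] mirrored_value_bounds[of b]
  by (simp add: reverse_complement_apply) arith

lemma ext_le: "m \<le> Suc n \<Longrightarrow> ext 0 0 n p m \<le> n"
  using permutes_in_seg[OF p, of m] by (simp add: ext_def)

lemma ext_reverse_complement:
  "ext (n+1) (n+1) n (reverse_complement n p) m = Suc n - ext 0 0 n p (Suc n - m)"
  if "m \<le> Suc n"
proof (cases "m = 0 \<or> m = Suc n")
  case False
  then have "1 \<le> m" "m \<le> n"
    using that by auto
  then show ?thesis
    by (simp add: ext_def reverse_complement_apply)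
qed (auto simp: ext_def)

lemma ext_reverse_complement_less_iff:
  assumes "a \<le> Suc n" "b \<le> Suc n"
  shows "ext (n+1) (n+1) n (reverse_complement n p) a < ext (n+1) (n+1) n (reverse_complement n p) b
    \<longleftrightarrow> ext 0 0 n p (Suc n - b) < ext 0 0 n p (Suc n - a)"
  using ext_le[of "Suc n - a"] ext_le[of "Suc n - b"]
  unfolding ext_reverse_complement[OF assms(1)] ext_reverse_complement[OF assms(2)] by arith

lemma reverse_complement_contains_132:
  assumes "contains_pattern [2,1,3] n p"
  shows "contains_pattern [1,3,2] n (reverse_complement n p)"
proof -
  obtain i j k where ijk: "1 \<le> i" "i < j" "j < k" "k \<le> n" "p j < p i" "p i < p k"
    using assms unfolding contains_213_iff by blast
  then have "reverse_complement n p (Suc n - k) < reverse_complement n p (Suc n - i)"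
    "reverse_complement n p (Suc n - i) < reverse_complement n p (Suc n - j)"
    by (simp_all add: reverse_complement_less_iff)
  moreover have "1 \<le> Suc n - k" "Suc n - k < Suc n - j" "Suc n - j < Suc n - i" "Suc n - i \<le> n"
    using ijk by auto
  ultimately show ?thesis
    unfolding contains_132_iff by blast
qed

lemma reverse_complement_contains_213:
  assumes "contains_pattern [1,3,2] n p"
  shows "contains_pattern [2,1,3] n (reverse_complement n p)"
proof -
  obtain i j k where ijk: "1 \<le> i" "i < j" "j < k" "k \<le> n" "p i < p k" "p k < p j"
    using assms unfolding contains_132_iff by blast
  then have "reverse_complement n p (Suc n - j) < reverse_complement n p (Suc n - k)"
    "reverse_complement n p (Suc n - k) < reverse_complement n p (Suc n - i)"
    by (simp_all add: reverse_complement_less_iff)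
  moreover have "1 \<le> Suc n - k" "Suc n - k < Suc n - j" "Suc n - j < Suc n - i" "Suc n - i \<le> n"
    using ijk by auto
  ultimately show ?thesis
    unfolding contains_213_iff by blast
qed

lemma des_reverse_complement: "des n (reverse_complement n p) = des n p"
  unfolding des_def
proof (rule sym, rule card_eq_by_involution[where f = "\<lambda>i. n - i" and D = "{1..<n}"])
  fix i assume "i \<in> {1..<n}"
  then show "i \<in> {i \<in> {1..<n}. reverse_complement n p (i + 1) < reverse_complement n p i}
    \<longleftrightarrow> n - i \<in> {i \<in> {1..<n}. p (i + 1) < p i}"
    by (auto simp: reverse_complement_less_iff Suc_diff_le)
qed auto

lemma adi_star_reverse_complement: "adi_star n (reverse_complement n p) = adi n p"
  unfolding adi_def adi_star_def
proof (rule sym, rule card_eq_by_involution[where f = "\<lambda>(i, j). (Suc n - j, Suc n - i)"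
      and D = "{(i, j). 1 \<le> i \<and> i < j \<and> j \<le> n}"])
  let ?q = "reverse_complement n p" and ?E = "ext (n+1) (n+1) n (reverse_complement n p)"
  fix x assume "x \<in> {(i, j). 1 \<le> i \<and> i < j \<and> j \<le> n}"
  then obtain i j where x: "x = (i, j)" and ij: "1 \<le> i" "i < j" "j \<le> n" by blast
  have range: "1 \<le> Suc n - j" "Suc n - j < Suc n - i" "Suc n - i \<le> n"
    using ij by auto
  have order: "?q j < ?q i \<longleftrightarrow> p (Suc n - i) < p (Suc n - j)"
    using ij by (simp add: reverse_complement_less_iff)
  have "i - 1 \<le> Suc n" "i \<le> Suc n" "Suc n - (i - 1) = Suc n - i + 1"
    using ij by arith+
  then have boundary: "?E (i - 1) < ?E i \<longleftrightarrow> ext 0 0 n p (Suc n - i) < ext 0 0 n p (Suc n - i + 1)"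
    using ext_reverse_complement_less_iff by presburger
  have between: "(\<exists>l. i < l \<and> l < j \<and> ?q i < ?q l) \<longleftrightarrow>
      (\<exists>l. Suc n - j < l \<and> l < Suc n - i \<and> p l < p (Suc n - i))"
  proof -
    have "(\<exists>l. i < l \<and> l < j \<and> ?q i < ?q l) \<longleftrightarrow>
        (\<exists>l. i < l \<and> l < j \<and> p (Suc n - l) < p (Suc n - i))"
      using ij by (intro ex_cong1) (auto simp: reverse_complement_less_iff)
    also have "\<dots> \<longleftrightarrow> (\<exists>l. Suc n - j < l \<and> l < Suc n - i \<and> p l < p (Suc n - i))"
      using ij by (intro ex_between_reflect) simp
    finally show ?thesis .
  qed
  show "x \<in> {(i, j). 1 \<le> i \<and> i < j \<and> j \<le> n \<and> ?q i > ?q j \<and>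
      (?E (i-1) < ?E i \<or> (\<exists>l. i < l \<and> l < j \<and> ?q l > ?q i))}
    \<longleftrightarrow> (case x of (i, j) \<Rightarrow> (Suc n - j, Suc n - i)) \<in> {(i, j). 1 \<le> i \<and> i < j \<and> j \<le> n \<and> p i > p j \<and>
      (ext 0 0 n p j < ext 0 0 n p (j+1) \<or> (\<exists>l. i < l \<and> l < j \<and> p l < p j))}"
    using ij range unfolding x mem_Collect_eq case_prod_conv order boundary between by blast
qed auto

lemma dd_star_reverse_complement: "dd_star n (reverse_complement n p) = dd n p"
  unfolding dd_def dd_star_def
proof (rule sym, rule card_eq_by_involution[where f = "\<lambda>i. Suc n - i" and D = "{1..n}"])
  let ?E = "ext (n+1) (n+1) n (reverse_complement n p)" and ?X = "ext 0 0 n p"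
  fix i assume i: "i \<in> {1..n}"
  have "i - 1 \<le> Suc n" "i \<le> Suc n" "i + 1 \<le> Suc n"
    "Suc n - (i - 1) = Suc n - i + 1" "Suc n - (i + 1) = Suc n - i - 1"
    using i by auto
  then have "?E i < ?E (i - 1) \<longleftrightarrow> ?X (Suc n - i + 1) < ?X (Suc n - i)"
    and "?E (i + 1) < ?E i \<longleftrightarrow> ?X (Suc n - i) < ?X (Suc n - i - 1)"
    using ext_reverse_complement_less_iff by presburger+
  moreover have "Suc n - i \<in> {1..n}"
    using i by auto
  ultimately show "i \<in> {i \<in> {1..n}. ?E (i-1) > ?E i \<and> ?E i > ?E (i+1)}
    \<longleftrightarrow> Suc n - i \<in> {i \<in> {1..n}. ?X (i-1) > ?X i \<and> ?X i > ?X (i+1)}"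
    using i by blast
qed auto

end

lemma reverse_complement_avoiders_iff:
  "reverse_complement n p \<in> avoiders n [1,3,2] \<longleftrightarrow> p \<in> avoiders n [2,1,3]"
  by (metis (no_types, lifting) avoiders_def mem_Collect_eq reverse_complement_contains_132
      reverse_complement_contains_213 reverse_complement_involution reverse_complement_permutes)

section \<open>Gluing two permutations around the entry 1\<close>

lemma ext_inside: "1 \<le> i \<Longrightarrow> i \<le> n \<Longrightarrow> ext c d n p i = p i"
  by (simp add: ext_def)

lemma ext_0 [simp]: "ext c d n p 0 = c"
  by (simp add: ext_def)

lemma ext_Suc [simp]: "ext c d n p (Suc n) = d"
  by (simp add: ext_def)

lemma card_Un_shifted:
  fixes A B C :: "nat set"
  assumes "finite A" "finite B" "finite C" "A \<inter> B = {}" "A \<union> B \<subseteq> {..c}" "0 \<notin> C"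
  shows "card (A \<union> B \<union> (\<lambda>i. i + c) ` C) = card A + card B + card C"
proof -
  have "(A \<union> B) \<inter> (\<lambda>i. i + c) ` C = {}"
    using assms(5,6) by fastforce
  then have "card (A \<union> B \<union> (\<lambda>i. i + c) ` C) = card (A \<union> B) + card ((\<lambda>i. i + c) ` C)"
    using assms(1-3) by (simp add: card_Un_disjoint)
  also have "\<dots> = card A + card B + card C"
    using assms(1,2,4) by (simp add: card_Un_disjoint card_image)
  finally show ?thesis .
qed

definition descents :: "nat \<Rightarrow> (nat \<Rightarrow> nat) \<Rightarrow> nat set" where
  "descents n p = {i \<in> {1..<n}. p (i+1) < p i}"

definition double_descents :: "nat \<Rightarrow> (nat \<Rightarrow> nat) \<Rightarrow> nat set" where
  "double_descents n p =
    {i \<in> {1..n}. ext 0 0 n p (i-1) > ext 0 0 n p i \<and> ext 0 0 n p i > ext 0 0 n p (i+1)}"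

definition admissible_inversions :: "nat \<Rightarrow> (nat \<Rightarrow> nat) \<Rightarrow> (nat \<times> nat) set" where
  "admissible_inversions n p = {(i, j). 1 \<le> i \<and> i < j \<and> j \<le> n \<and> p i > p j \<and>
      (ext 0 0 n p j < ext 0 0 n p (j+1) \<or> (\<exists>l. i < l \<and> l < j \<and> p l < p j))}"

lemma des_eq_card: "des n p = card (descents n p)"
  by (simp add: des_def descents_def)

lemma dd_eq_card: "dd n p = card (double_descents n p)"
  by (simp add: dd_def double_descents_def)

lemma adi_eq_card: "adi n p = card (admissible_inversions n p)"
  by (simp add: adi_def admissible_inversions_def)

lemma finite_admissible_inversions: "finite (admissible_inversions n p)"
  by (rule finite_subset[of _ "{1..n} \<times> {1..n}"]) (auto simp: admissible_inversions_def)

definition glue :: "nat \<Rightarrow> nat \<Rightarrow> (nat \<Rightarrow> nat) \<Rightarrow> (nat \<Rightarrow> nat) \<Rightarrow> nat \<Rightarrow> nat" where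
  "glue a b s t i = (if 1 \<le> i \<and> i \<le> a then s i + (b+1) else if i = a+1 then 1
     else if a+2 \<le> i \<and> i \<le> a+b+1 then t (i - (a+1)) + 1 else i)"

lemma glue_left: "1 \<le> i \<Longrightarrow> i \<le> a \<Longrightarrow> glue a b s t i = s i + (b+1)"
  by (simp add: glue_def)

lemma glue_min: "glue a b s t (a+1) = 1"
  by (simp add: glue_def)

lemma glue_right: "1 \<le> i \<Longrightarrow> i \<le> b \<Longrightarrow> glue a b s t (i + (a+1)) = t i + 1"
  by (simp add: glue_def)

lemma glue_outside: "i = 0 \<or> a+b+1 < i \<Longrightarrow> glue a b s t i = i"
  by (auto simp: glue_def)

lemma glue_position_cases:
  fixes a b x :: nat
  assumes "1 \<le> x" "x \<le> a+b+1"
  obtains "1 \<le> x" "x \<le> a" | "x = a+1" | x' where "1 \<le> x'" "x' \<le> b" "x = x' + (a+1)"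
proof -
  consider "x \<le> a" | "x = a+1" | "x > a+1" by linarith
  then show thesis
    using that assms by cases (auto simp: le_diff_conv2 intro: that(3)[of "x - (a+1)"])
qed

context
  fixes a b :: nat and s t :: "nat \<Rightarrow> nat"
  assumes s: "s permutes {1..a}" and t: "t permutes {1..b}"
begin

lemma glue_left_bounds: "1 \<le> i \<Longrightarrow> i \<le> a \<Longrightarrow> b+2 \<le> glue a b s t i \<and> glue a b s t i \<le> a+b+1"
  using permutes_in_seg[OF s, of i] by (simp add: glue_left)

lemma glue_right_bounds: "1 \<le> i \<Longrightarrow> i \<le> b \<Longrightarrow> 2 \<le> glue a b s t (i + (a+1)) \<and> glue a b s t (i + (a+1)) \<le> b+1"
  using permutes_in_seg[OF t, of i] glue_right[of i b a s t] by simp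

lemma glue_value_blocks:
  assumes "x \<in> {1..a+b+1}"
  shows "1 \<le> x \<and> x \<le> a \<and> b+2 \<le> glue a b s t x \<and> glue a b s t x \<le> a+b+1
    \<or> x = a+1 \<and> glue a b s t x = 1
    \<or> (\<exists>x'. 1 \<le> x' \<and> x' \<le> b \<and> x = x' + (a+1) \<and> 2 \<le> glue a b s t x \<and> glue a b s t x \<le> b+1)"
proof (rule glue_position_cases[of x a b])
  assume "1 \<le> x" "x \<le> a"
  then show ?thesis using glue_left_bounds by blast
next
  assume "x = a+1"
  then show ?thesis using glue_min by blast
next
  fix x' assume "1 \<le> x'" "x' \<le> b" "x = x' + (a+1)"
  then show ?thesis using glue_right_bounds by blast
qed (use assms in auto)

lemma glue_permutes: "glue a b s t permutes {1..a+b+1}"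
proof (rule inj_imp_permutes)
  let ?g = "glue a b s t"
  show "?g x \<in> {1..a+b+1}" if "x \<in> {1..a+b+1}" for x
    using glue_value_blocks[OF that] by auto
  show "inj_on ?g {1..a+b+1}"
  proof (rule inj_onI)
    fix x y assume x: "x \<in> {1..a+b+1}" and y: "y \<in> {1..a+b+1}" and eq: "?g x = ?g y"
    from glue_value_blocks[OF x] glue_value_blocks[OF y] show "x = y"
    proof (elim disjE exE conjE)
      assume "1 \<le> x" "x \<le> a" "1 \<le> y" "y \<le> a"
      then show "x = y"
        using eq permutes_inj[OF s] by (simp add: glue_left inj_eq)
    next
      fix x' y' assume "1 \<le> x'" "x' \<le> b" "x = x' + (a+1)" "1 \<le> y'" "y' \<le> b" "y = y' + (a+1)"
      then show "x = y"
        using eq permutes_inj[OF t] glue_right[of x' b a s t] glue_right[of y' b a s t] by (simp add: inj_eq)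
    qed (use eq in linarith)+
  qed
qed (auto simp: glue_outside)

lemma ext_glue_left_less_iff:
  assumes "x \<le> a+1" "y \<le> a+1" "x \<in> {1..a} \<or> y \<in> {1..a}"
  shows "ext 0 0 (a+b+1) (glue a b s t) x < ext 0 0 (a+b+1) (glue a b s t) y \<longleftrightarrow>
    ext 0 0 a s x < ext 0 0 a s y"
proof -
  have glue: "ext 0 0 (a+b+1) (glue a b s t) z = (if z = 0 then 0 else if z = a+1 then 1 else s z + (b+1))"
    and ext: "ext 0 0 a s z = (if z = 0 then 0 else if z = a+1 then 0 else s z)"
    and pos: "z \<in> {1..a} \<Longrightarrow> 1 \<le> s z" if "z \<le> a+1" for z
    using that permutes_in_seg[OF s, of z] glue_min[of a b s t] by (auto simp: ext_def glue_left)
  show ?thesis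
    using assms glue[of x] glue[of y] ext[of x] ext[of y] pos[of x] pos[of y] by auto
qed

lemma ext_glue_right_less_iff:
  assumes "x \<le> b+1" "y \<le> b+1" "x \<in> {1..b} \<or> y \<in> {1..b}"
  shows "ext 0 0 (a+b+1) (glue a b s t) (x + (a+1)) < ext 0 0 (a+b+1) (glue a b s t) (y + (a+1)) \<longleftrightarrow>
    ext 0 0 b t x < ext 0 0 b t y"
proof -
  have glue: "ext 0 0 (a+b+1) (glue a b s t) (z + (a+1)) =
      (if z = 0 then 1 else if z = b+1 then 0 else t z + 1)"
    and ext: "ext 0 0 b t z = (if z = 0 then 0 else if z = b+1 then 0 else t z)"
    and pos: "z \<in> {1..b} \<Longrightarrow> 1 \<le> t z" if "z \<le> b+1" for z
    using that permutes_in_seg[OF t, of z] glue_right[of z b a s t] glue_min[of a b s t]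
    by (auto simp: ext_def)
  show ?thesis
    using assms glue[of x] glue[of y] ext[of x] ext[of y] pos[of x] pos[of y] by auto
qed

lemma descent_glue_iff:
  assumes "x \<in> {1..a+b+1}"
  shows "x \<in> descents (a+b+1) (glue a b s t) \<longleftrightarrow>
    x \<in> descents a s \<or> x = a \<and> 0 < a \<or> (\<exists>x'. x = x' + (a+1) \<and> x' \<in> descents b t)"
proof (rule glue_position_cases[of x a b])
  assume x: "1 \<le> x" "x \<le> a"
  show ?thesis
  proof (cases "x = a")
    case True
    then show ?thesis
      using x glue_left_bounds[of x] glue_min[of a b s t] by (auto simp: descents_def)
  next
    case False
    then show ?thesis
      using x glue_left[of x a b s t] glue_left[of "x+1" a b s t] by (auto simp: descents_def)
  qed
next
  assume x: "x = a+1"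
  show ?thesis
  proof (cases "b = 0")
    case False
    then have "glue a b s t (a+1) < glue a b s t (a+2)"
      using glue_min[of a b s t] glue_right_bounds[of 1] by simp
    then show ?thesis
      using x by (auto simp: descents_def)
  qed (use x in \<open>auto simp: descents_def\<close>)
next
  fix x' assume x': "1 \<le> x'" "x' \<le> b" "x = x' + (a+1)"
  then show ?thesis
    using glue_right[of x' b a s t] glue_right[of "x'+1" b a s t] by (auto simp: descents_def)
qed (use assms in auto)

lemma des_glue: "des (a+b+1) (glue a b s t) = des a s + des b t + (if 0 < a then 1 else 0)"
proof -
  have "card (descents (a+b+1) (glue a b s t)) = card (
      descents a s \<union> (if 0 < a then {a} else {}) \<union> (\<lambda>i. i + (a+1)) ` descents b t)"
  proof (intro arg_cong[where f = card] set_eqI)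
    fix x
    show "x \<in> descents (a+b+1) (glue a b s t) \<longleftrightarrow>
        x \<in> descents a s \<union> (if 0 < a then {a} else {}) \<union> (\<lambda>i. i + (a+1)) ` descents b t"
    proof (cases "x \<in> {1..a+b+1}")
      case True
      then show ?thesis
        using descent_glue_iff[OF True] by auto
    qed (auto simp: descents_def)
  qed
  also have "\<dots> = des a s + card (if 0 < a then {a} else {}) + des b t"
    unfolding des_eq_card by (rule card_Un_shifted) (auto simp: descents_def)
  finally show ?thesis
    unfolding des_eq_card by simp
qed


lemma double_descent_glue_iff:
  assumes "x \<in> {1..a+b+1}"
  shows "x \<in> double_descents (a+b+1) (glue a b s t) \<longleftrightarrow> x \<in> double_descents a s \<or>
    x = a+1 \<and> 0 < a \<and> b = 0 \<or> (\<exists>x'. x = x' + (a+1) \<and> x' \<in> double_descents b t)"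
proof (rule glue_position_cases[of x a b])
  let ?X = "ext 0 0 (a+b+1) (glue a b s t)"
  assume x: "1 \<le> x" "x \<le> a"
  then have "?X x < ?X (x-1) \<longleftrightarrow> ext 0 0 a s x < ext 0 0 a s (x-1)"
    and "?X (x+1) < ?X x \<longleftrightarrow> ext 0 0 a s (x+1) < ext 0 0 a s x"
    by (intro ext_glue_left_less_iff; auto)+
  then show ?thesis
    using x by (auto simp: double_descents_def)
next
  let ?X = "ext 0 0 (a+b+1) (glue a b s t)"
  assume x: "x = a+1"
  have "?X (a+1) = 1"
    using glue_min[of a b s t] by (simp add: ext_inside)
  moreover have "1 < ?X a \<longleftrightarrow> 0 < a"
    using glue_left_bounds[of a] by (cases "a = 0") (simp_all add: ext_inside)
  moreover have "?X (a+2) < 1 \<longleftrightarrow> b = 0"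
    using glue_right_bounds[of 1] by (cases "b = 0") (simp_all add: ext_inside)
  ultimately show ?thesis
    using x by (auto simp: double_descents_def)
next
  let ?X = "ext 0 0 (a+b+1) (glue a b s t)"
  fix x' assume x': "1 \<le> x'" "x' \<le> b" "x = x' + (a+1)"
  have "?X (x' + (a+1)) < ?X ((x'-1) + (a+1)) \<longleftrightarrow> ext 0 0 b t x' < ext 0 0 b t (x'-1)"
    and "?X ((x'+1) + (a+1)) < ?X (x' + (a+1)) \<longleftrightarrow> ext 0 0 b t (x'+1) < ext 0 0 b t x'"
    using x' by (intro ext_glue_right_less_iff; auto)+
  moreover have "x - 1 = (x' - 1) + (a+1)" "x + 1 = (x' + 1) + (a+1)"
    using x' by simp_all
  ultimately show ?thesis
    using x' by (auto simp: double_descents_def)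
qed (use assms in auto)

lemma dd_glue: "dd (a+b+1) (glue a b s t) = dd a s + dd b t + (if 0 < a \<and> b = 0 then 1 else 0)"
proof -
  have "card (double_descents (a+b+1) (glue a b s t)) = card (double_descents a s \<union>
      (if 0 < a \<and> b = 0 then {a+1} else {}) \<union> (\<lambda>i. i + (a+1)) ` double_descents b t)"
  proof (intro arg_cong[where f = card] set_eqI)
    fix x
    show "x \<in> double_descents (a+b+1) (glue a b s t) \<longleftrightarrow> x \<in> double_descents a s \<union>
        (if 0 < a \<and> b = 0 then {a+1} else {}) \<union> (\<lambda>i. i + (a+1)) ` double_descents b t"
    proof (cases "x \<in> {1..a+b+1}")
      case True
      then show ?thesis
        using double_descent_glue_iff[OF True] by auto
    qed (auto simp: double_descents_def)
  qed
  also have "\<dots> = dd a s + card (if 0 < a \<and> b = 0 then {a+1} else {}) + dd b t"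
    unfolding dd_eq_card by (rule card_Un_shifted) (auto simp: double_descents_def)
  finally show ?thesis
    unfolding dd_eq_card by simp
qed

lemma admissible_inversion_glue_left_iff:
  assumes i: "1 \<le> i" "i \<le> a" and j: "i < j" "j \<le> a+b+1"
  shows "(i, j) \<in> admissible_inversions (a+b+1) (glue a b s t) \<longleftrightarrow>
    (i, j) \<in> admissible_inversions a s \<or> j = a+1 \<and> 0 < b \<or> a+1 < j"
proof -
  let ?g = "glue a b s t" and ?X = "ext 0 0 (a+b+1) (glue a b s t)"
  consider "j \<le> a" | "j = a+1" | "a+1 < j"
    by linarith
  then show ?thesis
  proof cases
    case 1
    have "?g j < ?g i \<longleftrightarrow> s j < s i" "\<forall>l. i < l \<and> l < j \<longrightarrow> (?g l < ?g j \<longleftrightarrow> s l < s j)"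
      using i j 1 glue_left by simp_all
    moreover have "?X j < ?X (j+1) \<longleftrightarrow> ext 0 0 a s j < ext 0 0 a s (j+1)"
      using i j 1 by (intro ext_glue_left_less_iff) auto
    ultimately show ?thesis
      using i j 1 by (auto simp: admissible_inversions_def)
  next
    case 2
    have "?X (a+1) = 1" "?g i > 1"
      using i glue_min[of a b s t] glue_left_bounds[of i] by (simp_all add: ext_inside)
    moreover have "1 < ?X (a+2) \<longleftrightarrow> 0 < b"
      using glue_right_bounds[of 1] by (cases "b = 0") (simp_all add: ext_inside)
    moreover have "\<not> (\<exists>l. i < l \<and> l < a+1 \<and> ?g l < 1)"
    proof
      assume "\<exists>l. i < l \<and> l < a+1 \<and> ?g l < 1"
      then obtain l where "i < l" "l < a+1" "?g l < 1"
        by blast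
      then show False
        using i glue_left_bounds[of l] by simp
    qed
    ultimately show ?thesis
      using i 2 glue_min[of a b s t] by (auto simp: admissible_inversions_def)
  next
    case 3
    define j' where "j' = j - (a+1)"
    have j': "1 \<le> j'" "j' \<le> b" "j = j' + (a+1)"
      using j 3 unfolding j'_def by auto
    then have "?g j < ?g i" "?g (a+1) < ?g j"
      using i glue_left_bounds[of i] glue_right_bounds[of j'] glue_min[of a b s t] by auto
    then show ?thesis
      using i j 3 by (auto simp: admissible_inversions_def)
  qed
qed

lemma admissible_inversion_glue_min: "(a+1, j) \<notin> admissible_inversions (a+b+1) (glue a b s t)"
proof
  assume "(a+1, j) \<in> admissible_inversions (a+b+1) (glue a b s t)"
  then have "a+1 < j" "j \<le> a+b+1" "glue a b s t j < 1"
    using glue_min[of a b s t] by (auto simp: admissible_inversions_def)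
  moreover define j' where "j' = j - (a+1)"
  ultimately have "1 \<le> j'" "j' \<le> b" "j = j' + (a+1)" "glue a b s t (j' + (a+1)) < 1"
    by auto
  then show False
    using glue_right_bounds[of j'] by simp
qed

lemma admissible_inversion_glue_right_iff:
  assumes "1 \<le> i" "i < j" "j \<le> b"
  shows "(i + (a+1), j + (a+1)) \<in> admissible_inversions (a+b+1) (glue a b s t) \<longleftrightarrow>
    (i, j) \<in> admissible_inversions b t"
proof -
  let ?g = "glue a b s t" and ?X = "ext 0 0 (a+b+1) (glue a b s t)"
  have "?g (j + (a+1)) < ?g (i + (a+1)) \<longleftrightarrow> t j < t i"
    using assms glue_right[of i b a s t] glue_right[of j b a s t] by simp
  moreover have "?X (j + (a+1)) < ?X ((j+1) + (a+1)) \<longleftrightarrow> ext 0 0 b t j < ext 0 0 b t (j+1)"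
    using assms by (intro ext_glue_right_less_iff) auto
  moreover have "(\<exists>l. i + (a+1) < l \<and> l < j + (a+1) \<and> ?g l < ?g (j + (a+1))) \<longleftrightarrow>
      (\<exists>l. i < l \<and> l < j \<and> t l < t j)"
  proof
    assume "\<exists>l. i + (a+1) < l \<and> l < j + (a+1) \<and> ?g l < ?g (j + (a+1))"
    then obtain l where l: "i + (a+1) < l" "l < j + (a+1)" "?g l < ?g (j + (a+1))"
      by blast
    then have "?g ((l - (a+1)) + (a+1)) < ?g (j + (a+1))"
      by simp
    then have "t (l - (a+1)) < t j"
      using assms l glue_right[of "l - (a+1)" b a s t] glue_right[of j b a s t] by simp
    then show "\<exists>l. i < l \<and> l < j \<and> t l < t j"
      using l by (intro exI[of _ "l - (a+1)"]) auto
  next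
    assume "\<exists>l. i < l \<and> l < j \<and> t l < t j"
    then obtain l where l: "i < l" "l < j" "t l < t j"
      by blast
    then show "\<exists>l. i + (a+1) < l \<and> l < j + (a+1) \<and> ?g l < ?g (j + (a+1))"
      using assms glue_right[of l b a s t] glue_right[of j b a s t]
      by (intro exI[of _ "l + (a+1)"]) simp
  qed
  ultimately show ?thesis
    using assms by (simp add: admissible_inversions_def)
qed

lemma admissible_inversions_glue:
  "admissible_inversions (a+b+1) (glue a b s t) =
    admissible_inversions a s \<union> (if 0 < b then {1..a} \<times> {a+1} else {}) \<union> {1..a} \<times> {a+2..a+b+1} \<union>
    (\<lambda>(i, j). (i + (a+1), j + (a+1))) ` admissible_inversions b t"
    (is "_ = ?rhs")
proof (intro set_eqI)
  fix x :: "nat \<times> nat"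
  obtain i j where x: "x = (i, j)"
    by fastforce
  show "x \<in> admissible_inversions (a+b+1) (glue a b s t) \<longleftrightarrow> x \<in> ?rhs"
  proof (cases "1 \<le> i \<and> i < j \<and> j \<le> a+b+1")
    case True
    then have "1 \<le> i" "i \<le> a+b+1"
      by auto
    then show ?thesis
    proof (rule glue_position_cases)
      assume "1 \<le> i" "i \<le> a"
      then show ?thesis
        using True admissible_inversion_glue_left_iff[of i j] unfolding x
        by (auto simp: admissible_inversions_def)
    next
      assume "i = a+1"
      then show ?thesis
        using admissible_inversion_glue_min[of j] unfolding x
        by (auto simp: admissible_inversions_def)
    next
      fix i' assume i': "1 \<le> i'" "i' \<le> b" "i = i' + (a+1)"
      define j' where "j' = j - (a+1)"
      have j': "i' < j'" "j' \<le> b" "j = j' + (a+1)"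
        using True i' unfolding j'_def by auto
      have "x \<in> (\<lambda>(i, j). (i + (a+1), j + (a+1))) ` admissible_inversions b t \<longleftrightarrow>
          (i', j') \<in> admissible_inversions b t"
        unfolding x i'(3) j'(3) by (auto simp: image_iff intro: bexI[where x = "(i', j')"])
      then show ?thesis
        using admissible_inversion_glue_right_iff[of i' j'] i' j' unfolding x
        by (auto simp: admissible_inversions_def)
    qed
  qed (auto simp: x admissible_inversions_def)
qed

lemma adi_glue: "adi (a+b+1) (glue a b s t) = adi a s + adi b t + a * b + (if 0 < b then a else 0)"
proof -
  let ?shift = "\<lambda>(i, j). (i + (a+1), j + (a+1))"
  let ?M = "if 0 < b then {1..a} \<times> {a+1} else {}" and ?R = "{1..a} \<times> {a+2..a+b+1}"
  have "adi (a+b+1) (glue a b s t) =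
      adi a s + card ?M + card ?R + card (?shift ` admissible_inversions b t)"
    unfolding adi_eq_card admissible_inversions_glue using finite_admissible_inversions
    by (subst card_Un_disjoint, auto simp: admissible_inversions_def split: if_splits)+
  moreover have "card (?shift ` admissible_inversions b t) = adi b t"
    unfolding adi_eq_card by (rule card_image) (auto simp: inj_on_def)
  moreover have "card ?R = a * b" "card ?M = (if 0 < b then a else 0)"
    by (simp_all add: card_cartesian_product)
  ultimately show ?thesis
    by simp
qed

lemma glue_avoids_213:
  assumes "\<not> contains_pattern [2,1,3] a s" and "\<not> contains_pattern [2,1,3] b t"
  shows "\<not> contains_pattern [2,1,3] (a+b+1) (glue a b s t)"
proof
  let ?g = "glue a b s t"
  assume "contains_pattern [2,1,3] (a+b+1) ?g"
  then obtain i j k where ijk: "1 \<le> i" "i < j" "j < k" "k \<le> a+b+1" "?g j < ?g i" "?g i < ?g k"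
    unfolding contains_213_iff by blast
  then have "i \<in> {1..a+b+1}" "j \<in> {1..a+b+1}" "k \<in> {1..a+b+1}"
    by auto
  note blocks = glue_value_blocks[OF this(1)] glue_value_blocks[OF this(2)]
    glue_value_blocks[OF this(3)]
  from blocks(1) show False
  proof (elim disjE exE conjE)
    assume i: "1 \<le> i" "i \<le> a" "b+2 \<le> ?g i"
    show False
    proof (cases "k \<le> a")
      case True
      then have "1 \<le> j" "j \<le> a" "1 \<le> k"
        using ijk by auto
      then have "s j < s i" "s i < s k"
        using ijk i True glue_left[of i a b s t] glue_left[of j a b s t] glue_left[of k a b s t] by simp_all
      then show False
        using assms(1) ijk True unfolding contains_213_iff by blast
    next
      case False
      then have "?g k \<le> b+1"
        using blocks(3) by auto
      then show False
        using i ijk by linarith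
    qed
  next
    assume "i = a+1" "?g i = 1"
    then show False
      using blocks(2) ijk by auto
  next
    fix i' assume i: "1 \<le> i'" "i' \<le> b" "i = i' + (a+1)"
    define j' k' where "j' = j - (a+1)" and "k' = k - (a+1)"
    have jk: "j = j' + (a+1)" "k = k' + (a+1)" "i' < j'" "j' < k'" "k' \<le> b"
      using ijk i unfolding j'_def k'_def by auto
    then have "1 \<le> j'" "j' \<le> b" "1 \<le> k'"
      using i by auto
    then have "t j' < t i'" "t i' < t k'"
      using ijk i jk glue_right[of i' b a s t] glue_right[of j' b a s t] glue_right[of k' b a s t]
      by simp_all
    moreover note jk
    ultimately show False
      using assms(2) i unfolding contains_213_iff by blast
  qed
qed

end

section \<open>Decomposition of 213-avoiders\<close>

abbreviation avoiders213 :: "nat \<Rightarrow> (nat \<Rightarrow> nat) set" where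
  "avoiders213 n \<equiv> avoiders n [2,1,3]"

lemma glue_inj:
  assumes s: "s permutes {1..a}" and t: "t permutes {1..b}"
    and s': "s' permutes {1..a'}" and t': "t' permutes {1..b'}"
    and n: "a + b = a' + b'" and eq: "glue a b s t = glue a' b' s' t'"
  shows "a = a' \<and> s = s' \<and> t = t'"
proof -
  have "glue a' b' s' t' (a+1) = glue a' b' s' t' (a'+1)"
    using eq glue_min by metis
  then have a: "a = a'"
    using permutes_inj[OF glue_permutes[OF s' t']] by (simp add: inj_eq)
  then have b: "b = b'"
    using n by simp
  have "s i = s' i" for i
  proof (cases "1 \<le> i \<and> i \<le> a")
    case True
    then show ?thesis
      using eq glue_left[of i a b s t] glue_left[of i a' b' s' t'] a b by simp
  next
    case False
    then show ?thesis
      using permutes_not_in[OF s, of i] permutes_not_in[OF s', of i] a by auto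
  qed
  moreover have "t i = t' i" for i
  proof (cases "1 \<le> i \<and> i \<le> b")
    case True
    then show ?thesis
      using eq glue_right[of i b a s t] glue_right[of i b' a' s' t'] a b by simp
  next
    case False
    then show ?thesis
      using permutes_not_in[OF t, of i] permutes_not_in[OF t', of i] b by auto
  qed
  ultimately show ?thesis
    using a by auto
qed

definition block_pattern :: "(nat \<Rightarrow> nat) \<Rightarrow> nat \<Rightarrow> nat \<Rightarrow> nat \<Rightarrow> nat \<Rightarrow> nat" where
  "block_pattern p d e m i = (if i \<in> {1..m} then p (i + d) - e else i)"

lemma block_pattern_permutes:
  assumes p: "p permutes {1..n}" and "d + m \<le> n"
    and in_range: "\<And>i. i \<in> {1..m} \<Longrightarrow> p (i + d) \<in> {e+1..e+m}"
  shows "block_pattern p d e m permutes {1..m}"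
proof (rule inj_imp_permutes)
  show "inj_on (block_pattern p d e m) {1..m}"
  proof (rule inj_onI)
    fix x y assume x: "x \<in> {1..m}" and y: "y \<in> {1..m}"
      and "block_pattern p d e m x = block_pattern p d e m y"
    then have "p (x + d) = p (y + d)"
      using in_range[OF x] in_range[OF y] x y by (simp add: block_pattern_def) arith
    then show "x = y"
      using permutes_inj[OF p] by (simp add: inj_eq)
  qed
  show "block_pattern p d e m x \<in> {1..m}" if "x \<in> {1..m}" for x
    using in_range[OF that] that by (auto simp: block_pattern_def)
qed (auto simp: block_pattern_def)

lemma contains_213_block_pattern:
  assumes "d + m \<le> n" and in_range: "\<And>i. i \<in> {1..m} \<Longrightarrow> e < p (i + d)"
    and "contains_pattern [2,1,3] m (block_pattern p d e m)"
  shows "contains_pattern [2,1,3] n p"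
proof -
  obtain i j k where ijk: "1 \<le> i" "i < j" "j < k" "k \<le> m"
    and "block_pattern p d e m j < block_pattern p d e m i"
      "block_pattern p d e m i < block_pattern p d e m k"
    using assms(3) unfolding contains_213_iff by blast
  moreover have "e < p (i + d)" "e < p (j + d)" "e < p (k + d)"
    using ijk in_range by auto
  ultimately have "p (j + d) < p (i + d)" "p (i + d) < p (k + d)"
    by (simp_all add: block_pattern_def)
  moreover have "1 \<le> i + d" "i + d < j + d" "j + d < k + d" "k + d \<le> n"
    using ijk assms(1) by auto
  ultimately show ?thesis
    unfolding contains_213_iff by blast
qed


lemma block_pattern_avoiders213:
  assumes p: "p \<in> avoiders213 n" and "d + m \<le> n"
    and in_range: "\<And>i. i \<in> {1..m} \<Longrightarrow> p (i + d) \<in> {e+1..e+m}"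
  shows "block_pattern p d e m \<in> avoiders213 m"
proof -
  have "block_pattern p d e m permutes {1..m}"
    using p assms(2) in_range by (intro block_pattern_permutes) (auto simp: avoiders_def)
  moreover have "\<not> contains_pattern [2,1,3] m (block_pattern p d e m)"
  proof
    assume "contains_pattern [2,1,3] m (block_pattern p d e m)"
    moreover have "e < p (i + d)" if "i \<in> {1..m}" for i
      using in_range[OF that] by simp
    ultimately have "contains_pattern [2,1,3] n p"
      using assms(2) by (blast intro: contains_213_block_pattern)
    with p show False
      by (simp add: avoiders_def)
  qed
  ultimately show ?thesis
    by (simp add: avoiders_def)
qed

context
  fixes n :: nat and p :: "nat \<Rightarrow> nat"
  assumes p: "p permutes {1..n}" and avoid: "\<not> contains_pattern [2,1,3] n p"
begin

lemma avoider_213_left_above_right: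
  assumes "p k = 1" "1 \<le> i" "i < k" "k < j" "j \<le> n"
  shows "p j < p i"
proof (rule ccontr)
  assume "\<not> p j < p i"
  moreover have "p i \<noteq> p j" "p i \<noteq> p k"
    using assms(3,4) inj_eq[OF permutes_inj[OF p], of i j] inj_eq[OF permutes_inj[OF p], of i k] by auto
  moreover have "1 \<le> p i"
    using assms permutes_in_seg[OF p, of i] by simp
  ultimately have "p k < p i" "p i < p j"
    using assms(1) by simp_all
  then show False
    using avoid assms unfolding contains_213_iff by blast
qed

context
  fixes a b :: nat
  assumes min: "p (a+1) = 1" and n: "a + b + 1 = n"
begin

lemma avoider_213_value_ge_2:
  assumes "1 \<le> i" "i \<le> n" "i \<noteq> a+1"
  shows "2 \<le> p i"
proof -
  have "p i \<noteq> p (a+1)"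
    using assms(3) inj_eq[OF permutes_inj[OF p]] by simp
  moreover have "1 \<le> p i"
    using assms(1,2) permutes_in_seg[OF p, of i] by simp
  ultimately show ?thesis
    using min by simp
qed

lemma avoider_213_left_values:
  assumes i: "i \<in> {1..a}"
  shows "p i \<in> {b+2..n}"
proof -
  have "p ` {a+2..n} \<subseteq> {2..<p i}"
  proof
    fix y assume "y \<in> p ` {a+2..n}"
    then obtain j where j: "j \<in> {a+2..n}" "y = p j"
      by blast
    have "p j < p i"
      using avoider_213_left_above_right[OF min, of i j] i j by auto
    moreover have "2 \<le> p j"
      using avoider_213_value_ge_2[of j] j n by auto
    ultimately show "y \<in> {2..<p i}"
      using j by simp
  qed
  then have "card (p ` {a+2..n}) \<le> card {2..<p i}"
    by (rule card_mono[rotated]) simp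
  moreover have "card (p ` {a+2..n}) = b"
    using n by (simp add: card_image[OF permutes_inj_on[OF p]])
  moreover have "2 \<le> p i" "p i \<le> n"
    using i n avoider_213_value_ge_2[of i] permutes_in_seg[OF p, of i] by auto
  ultimately show ?thesis
    by simp
qed

lemma avoider_213_right_values:
  assumes j: "j \<in> {1..b}"
  shows "p (j + (a+1)) \<in> {2..b+1}"
proof -
  have "p ` {1..a} \<subseteq> {p (j + (a+1))<..n}"
  proof
    fix y assume "y \<in> p ` {1..a}"
    then obtain i where i: "i \<in> {1..a}" "y = p i"
      by blast
    have "p (j + (a+1)) < p i"
      using avoider_213_left_above_right[OF min, of i "j + (a+1)"] i j n by auto
    moreover have "p i \<le> n"
      using i n permutes_in_seg[OF p, of i] by auto
    ultimately show "y \<in> {p (j + (a+1))<..n}"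
      using i by simp
  qed
  then have "card (p ` {1..a}) \<le> card {p (j + (a+1))<..n}"
    by (rule card_mono[rotated]) simp
  moreover have "card (p ` {1..a}) = a"
    by (simp add: card_image[OF permutes_inj_on[OF p]])
  moreover have "2 \<le> p (j + (a+1))" "p (j + (a+1)) \<le> n"
    using j n avoider_213_value_ge_2[of "j + (a+1)"] permutes_in_seg[OF p, of "j + (a+1)"] by auto
  ultimately show ?thesis
    using n by simp
qed

lemma avoider_213_eq_glue: "p = glue a b (block_pattern p 0 (b+1) a) (block_pattern p (a+1) 1 b)"
proof
  fix i
  show "p i = glue a b (block_pattern p 0 (b+1) a) (block_pattern p (a+1) 1 b) i"
  proof (cases "1 \<le> i \<and> i \<le> n")
    case False
    then show ?thesis
      using permutes_not_in[OF p, of i] n glue_outside by auto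
  next
    case True
    then have "1 \<le> i" "i \<le> a+b+1"
      using n by auto
    then show ?thesis
    proof (rule glue_position_cases)
      assume "1 \<le> i" "i \<le> a"
      then show ?thesis
        using avoider_213_left_values[of i] by (simp add: glue_left block_pattern_def)
    next
      assume "i = a+1"
      then show ?thesis
        using min glue_min by simp
    next
      fix i' assume "1 \<le> i'" "i' \<le> b" "i = i' + (a+1)"
      then show ?thesis
        using avoider_213_right_values[of i'] glue_right[of i' b a]
        by (simp add: block_pattern_def)
    qed
  qed
qed

end

lemma avoider_213_decomposition:
  assumes "1 \<le> n"
  obtains a b s t where "a + b + 1 = n" "s \<in> avoiders213 a" "t \<in> avoiders213 b" "p = glue a b s t"
proof -
  have "1 \<in> p ` {1..n}"
    using assms permutes_image[OF p] by simp
  then obtain k where k: "1 = p k" "k \<in> {1..n}"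
    by (rule imageE)
  define a b where "a = k - 1" and "b = n - k"
  have ab: "p (a+1) = 1" "a + b + 1 = n"
    using k unfolding a_def b_def by auto
  have av: "p \<in> avoiders213 n"
    using p avoid by (simp add: avoiders_def)
  have "p (i + 0) \<in> {b+1+1..b+1+a}" if "i \<in> {1..a}" for i
    using avoider_213_left_values[OF ab that] ab(2) by auto
  moreover have "0 + a \<le> n" "(a+1) + b \<le> n"
    using ab(2) by simp_all
  ultimately have "block_pattern p 0 (b+1) a \<in> avoiders213 a"
    by (intro block_pattern_avoiders213[OF av])
  have "p (i + (a+1)) \<in> {1+1..1+b}" if "i \<in> {1..b}" for i
    using avoider_213_right_values[OF ab that] by auto
  then have "block_pattern p (a+1) 1 b \<in> avoiders213 b"
    using \<open>(a+1) + b \<le> n\<close> by (intro block_pattern_avoiders213[OF av])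
  with \<open>block_pattern p 0 (b+1) a \<in> avoiders213 a\<close> show thesis
    by (rule that[OF ab(2) _ _ avoider_213_eq_glue[OF ab]])
qed

end

lemma finite_avoiders: "finite (avoiders n pat)"
  by (rule finite_subset[OF _ finite_permutations[of "{1..n}"]]) (auto simp: avoiders_def)

lemma avoiders213_Suc:
  "avoiders213 (Suc n) =
    (\<Union>a\<le>n. (\<lambda>(s, t). glue a (n - a) s t) ` (avoiders213 a \<times> avoiders213 (n - a)))"
proof (intro equalityI subsetI)
  fix p assume "p \<in> avoiders213 (Suc n)"
  then have "p permutes {1..Suc n}" "\<not> contains_pattern [2,1,3] (Suc n) p"
    by (simp_all add: avoiders_def)
  then obtain a b s t where "a + b + 1 = Suc n" "s \<in> avoiders213 a" "t \<in> avoiders213 b"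
      "p = glue a b s t"
    by (rule avoider_213_decomposition) simp
  then show "p \<in> (\<Union>a\<le>n. (\<lambda>(s, t). glue a (n - a) s t) ` (avoiders213 a \<times> avoiders213 (n - a)))"
    by force
next
  fix p assume "p \<in> (\<Union>a\<le>n. (\<lambda>(s, t). glue a (n - a) s t) ` (avoiders213 a \<times> avoiders213 (n - a)))"
  then obtain a s t where a: "a \<le> n" and st: "s \<in> avoiders213 a" "t \<in> avoiders213 (n - a)"
    and p: "p = glue a (n - a) s t"
    by auto
  have "a + (n - a) + 1 = Suc n"
    using a by simp
  then show "p \<in> avoiders213 (Suc n)"
    using st glue_permutes glue_avoids_213 unfolding p by (fastforce simp: avoiders_def)
qed

lemma sum_avoiders213_Suc:
  "(\<Sum>p\<in>avoiders213 (Suc n). g p) =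
    (\<Sum>a\<le>n. \<Sum>s\<in>avoiders213 a. \<Sum>t\<in>avoiders213 (n - a). g (glue a (n - a) s t))"
proof -
  let ?glue = "\<lambda>a (s, t). glue a (n - a) s t" and ?A = "\<lambda>a. avoiders213 a \<times> avoiders213 (n - a)"
  have inj: "inj_on (?glue a) (?A a)" if "a \<le> n" for a
  proof (rule inj_onI, clarify)
    fix s t s' t' assume "s \<in> avoiders213 a" "t \<in> avoiders213 (n - a)"
      "s' \<in> avoiders213 a" "t' \<in> avoiders213 (n - a)"
      and "glue a (n - a) s t = glue a (n - a) s' t'"
    then show "s = s' \<and> t = t'"
      using glue_inj[of s a t "n - a" s' a t' "n - a"] by (simp add: avoiders_def)
  qed
  have disjoint: "?glue a ` ?A a \<inter> ?glue a' ` ?A a' = {}" if "a \<noteq> a'" "a \<le> n" "a' \<le> n" for a a'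
  proof (rule ccontr)
    assume "?glue a ` ?A a \<inter> ?glue a' ` ?A a' \<noteq> {}"
    then obtain s t s' t' where "s \<in> avoiders213 a" "t \<in> avoiders213 (n - a)"
      "s' \<in> avoiders213 a'" "t' \<in> avoiders213 (n - a')"
      and "glue a (n - a) s t = glue a' (n - a') s' t'"
      by auto
    then have "a = a'"
      using glue_inj[of s a t "n - a" s' a' t' "n - a'"] that by (simp add: avoiders_def)
    with that show False
      by simp
  qed
  have "(\<Sum>p\<in>avoiders213 (Suc n). g p) = (\<Sum>a\<le>n. \<Sum>p\<in>?glue a ` ?A a. g p)"
    unfolding avoiders213_Suc using disjoint
    by (intro sum.UNION_disjoint) (auto simp: finite_avoiders)
  also have "\<dots> = (\<Sum>a\<le>n. \<Sum>x\<in>?A a. g (?glue a x))"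
    using inj by (intro sum.cong refl) (simp add: sum.reindex)
  also have "\<dots> = (\<Sum>a\<le>n. \<Sum>s\<in>avoiders213 a. \<Sum>t\<in>avoiders213 (n - a). g (glue a (n - a) s t))"
    by (simp add: sum.cartesian_product split_def)
  finally show ?thesis .
qed

lemma avoiders213_0: "avoiders213 0 = {id}"
  unfolding avoiders_def contains_213_iff by auto

lemma des_0 [simp]: "des 0 p = 0"
  by (simp add: des_def)

lemma dd_0 [simp]: "dd 0 p = 0"
  by (simp add: dd_def)

lemma adi_0 [simp]: "adi 0 p = 0"
proof -
  have "{(i, j). 1 \<le> i \<and> i < j \<and> j \<le> (0::nat) \<and> p i > p j \<and>
      (ext 0 0 0 p j < ext 0 0 0 p (j+1) \<or> (\<exists>l. i < l \<and> l < j \<and> p l < p j))} = {}"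
    by auto
  then show ?thesis
    unfolding adi_def by (simp only: card.empty)
qed

section \<open>The gamma-expansion\<close>

lemma twice_des_le_of_dd_eq_0:
  assumes p: "p permutes {1..n}" and no_dd: "dd n p = 0"
  shows "2 * des n p \<le> n - 1"
proof -
  let ?E = "ext 0 0 n p" and ?D = "{i \<in> {1..<n}. p (i+1) < p i}"
  have no_dd_at: "\<not> (?E (i-1) > ?E i \<and> ?E i > ?E (i+1))" if "1 \<le> i" "i \<le> n" for i
    using no_dd that unfolding dd_def by auto
  have "Suc ` ?D \<subseteq> {1..<n}"
  proof
    fix y assume "y \<in> Suc ` ?D"
    then obtain i where i: "1 \<le> i" "i < n" "p (i+1) < p i" "y = Suc i"
      by auto
    have "Suc i \<noteq> n"
    proof
      assume n: "Suc i = n"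
      then have "?E (Suc i - 1) = p i" "?E (Suc i) = p (Suc i)" "?E (Suc i + 1) = 0"
        using i by (auto simp: ext_inside)
      moreover have "1 \<le> p (Suc i)" "Suc i \<le> n"
        using permutes_in_seg[OF p, of "Suc i"] i n by auto
      ultimately show False
        using no_dd_at[of "Suc i"] i(3) by simp
    qed
    then show "y \<in> {1..<n}"
      using i by simp
  qed
  moreover have "?D \<subseteq> {1..<n}"
    by auto
  moreover have "?D \<inter> Suc ` ?D = {}"
  proof (rule ccontr)
    assume "?D \<inter> Suc ` ?D \<noteq> {}"
    then obtain j where "1 \<le> j" "Suc j < n" "p (Suc j) < p j" "p (Suc (Suc j)) < p (Suc j)"
      by auto
    then show False
      using no_dd_at[of "Suc j"] by (simp add: ext_def)
  qed
  ultimately have "card (?D \<union> Suc ` ?D) \<le> card {1..<n}"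
    by (intro card_mono) auto
  moreover have "card (?D \<union> Suc ` ?D) = card ?D + card (Suc ` ?D)"
    using \<open>?D \<inter> Suc ` ?D = {}\<close> by (intro card_Un_disjoint) auto
  ultimately have "card ?D + card (Suc ` ?D) \<le> card {1..<n}"
    by simp
  then show ?thesis
    unfolding des_def by (simp add: card_image)
qed

definition des_adi_poly :: "'a::comm_ring_1 \<Rightarrow> 'a \<Rightarrow> nat \<Rightarrow> 'a" where
  "des_adi_poly t q n = (\<Sum>\<pi>\<in>avoiders213 n. t ^ des n \<pi> * q ^ adi n \<pi>)"

text \<open>The right-hand side of the theorem regrouped by permutation; permutations with a double
  descent contribute nothing.\<close>
definition gamma_weight :: "'a::comm_ring_1 \<Rightarrow> 'a \<Rightarrow> nat \<Rightarrow> (nat \<Rightarrow> nat) \<Rightarrow> 'a" where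
  "gamma_weight t q n \<pi> =
    (if dd n \<pi> = 0 then t ^ des n \<pi> * (1 + t) ^ (n - 1 - 2 * des n \<pi>) * q ^ adi n \<pi> else 0)"

definition gamma_poly :: "'a::comm_ring_1 \<Rightarrow> 'a \<Rightarrow> nat \<Rightarrow> 'a" where
  "gamma_poly t q n = (\<Sum>\<pi>\<in>avoiders213 n. gamma_weight t q n \<pi>)"

lemma des_adi_poly_0: "des_adi_poly t q 0 = 1"
  unfolding des_adi_poly_def avoiders213_0 by simp

lemma gamma_poly_0: "gamma_poly t q 0 = 1"
  unfolding gamma_poly_def avoiders213_0 by (simp add: gamma_weight_def)

lemma sum_atMost_split_ends:
  fixes f :: "nat \<Rightarrow> 'a::comm_monoid_add"
  assumes "1 \<le> n"
  shows "(\<Sum>a\<le>n. f a) = f 0 + (\<Sum>a\<in>{1..<n}. f a) + f n"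
proof -
  have "{..n} = insert 0 (insert n {1..<n})"
    using assms by auto
  then show ?thesis
    using assms by (simp add: ac_simps)
qed

lemma sum_sum_scaled_product:
  fixes c :: "'a::comm_semiring_0"
  shows "(\<Sum>x\<in>A. \<Sum>y\<in>B. c * (f x * g y)) = c * (sum f A * sum g B)"
  by (subst sum_product) (simp only: sum_distrib_left)

lemma des_adi_weight_glue:
  fixes t q :: "'a::comm_ring_1"
  assumes "\<sigma> permutes {1..a}" "\<tau> permutes {1..b}"
  shows "t ^ des (a+b+1) (glue a b \<sigma> \<tau>) * q ^ adi (a+b+1) (glue a b \<sigma> \<tau>) =
    t ^ (if 0 < a then 1 else 0) * q ^ (a * b + (if 0 < b then a else 0)) *
    ((t ^ des a \<sigma> * q ^ adi a \<sigma>) * (t ^ des b \<tau> * q ^ adi b \<tau>))"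
  unfolding des_glue[OF assms] adi_glue[OF assms] by (simp add: power_add ac_simps)

lemma des_adi_poly_Suc:
  fixes t q :: "'a::comm_ring_1"
  shows "des_adi_poly t q (Suc n) = (\<Sum>a\<le>n. t ^ (if 0 < a then 1 else 0) *
     q ^ (a * (n - a) + (if a < n then a else 0)) * (des_adi_poly t q a * des_adi_poly t q (n - a)))"
  unfolding sum_avoiders213_Suc des_adi_poly_def
proof (intro sum.cong refl)
  fix a assume "a \<in> {..n}"
  then have n: "Suc n = a + (n - a) + 1" and pos: "0 < n - a \<longleftrightarrow> a < n"
    by auto
  let ?c = "t ^ (if 0 < a then 1 else 0) * q ^ (a * (n - a) + (if a < n then a else 0))"
  have "(\<Sum>\<sigma>\<in>avoiders213 a. \<Sum>\<tau>\<in>avoiders213 (n - a).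
        t ^ des (Suc n) (glue a (n - a) \<sigma> \<tau>) * q ^ adi (Suc n) (glue a (n - a) \<sigma> \<tau>)) =
      (\<Sum>\<sigma>\<in>avoiders213 a. \<Sum>\<tau>\<in>avoiders213 (n - a).
        ?c * ((t ^ des a \<sigma> * q ^ adi a \<sigma>) * (t ^ des (n - a) \<tau> * q ^ adi (n - a) \<tau>)))"
    unfolding n using des_adi_weight_glue[of _ a _ "n - a" t q] pos
    by (intro sum.cong refl) (simp add: avoiders_def)
  also have "\<dots> = ?c * ((\<Sum>\<sigma>\<in>avoiders213 a. t ^ des a \<sigma> * q ^ adi a \<sigma>) *
      (\<Sum>\<tau>\<in>avoiders213 (n - a). t ^ des (n - a) \<tau> * q ^ adi (n - a) \<tau>))"
    by (rule sum_sum_scaled_product)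
  finally show "(\<Sum>\<sigma>\<in>avoiders213 a. \<Sum>\<tau>\<in>avoiders213 (n - a).
        t ^ des (Suc n) (glue a (n - a) \<sigma> \<tau>) * q ^ adi (Suc n) (glue a (n - a) \<sigma> \<tau>)) =
      ?c * ((\<Sum>\<sigma>\<in>avoiders213 a. t ^ des a \<sigma> * q ^ adi a \<sigma>) *
      (\<Sum>\<tau>\<in>avoiders213 (n - a). t ^ des (n - a) \<tau> * q ^ adi (n - a) \<tau>))" .
qed

lemma des_adi_poly_recurrence:
  fixes t q :: "'a::comm_ring_1"
  assumes "1 \<le> n"
  shows "des_adi_poly t q (Suc n) = (1 + t) * des_adi_poly t q n +
    (\<Sum>a\<in>{1..<n}. t * q ^ (a * (n - a) + a) * (des_adi_poly t q a * des_adi_poly t q (n - a)))"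
proof -
  have "(\<Sum>a\<in>{1..<n}. t ^ (if 0 < a then 1 else 0) * q ^ (a * (n - a) + (if a < n then a else 0)) *
      (des_adi_poly t q a * des_adi_poly t q (n - a))) =
    (\<Sum>a\<in>{1..<n}. t * q ^ (a * (n - a) + a) * (des_adi_poly t q a * des_adi_poly t q (n - a)))"
    by (intro sum.cong) auto
  then show ?thesis
    unfolding des_adi_poly_Suc sum_atMost_split_ends[OF assms]
    using assms by (simp add: des_adi_poly_0 distrib_right)
qed

lemma gamma_weight_glue_left_empty:
  fixes t q :: "'a::comm_ring_1"
  assumes "\<sigma> permutes {1..0}" "\<tau> permutes {1..b}" "1 \<le> b"
  shows "gamma_weight t q (b+1) (glue 0 b \<sigma> \<tau>) = (1 + t) * gamma_weight t q b \<tau>"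
proof -
  have stats: "des (0+b+1) (glue 0 b \<sigma> \<tau>) = des b \<tau>" "adi (0+b+1) (glue 0 b \<sigma> \<tau>) = adi b \<tau>"
      "dd (0+b+1) (glue 0 b \<sigma> \<tau>) = dd b \<tau>"
    using des_glue[OF assms(1,2)] adi_glue[OF assms(1,2)] dd_glue[OF assms(1,2)] by simp_all
  show ?thesis
  proof (cases "dd b \<tau> = 0")
    case True
    then have "b + 1 - 1 - 2 * des b \<tau> = Suc (b - 1 - 2 * des b \<tau>)"
      using twice_des_le_of_dd_eq_0[OF assms(2)] assms(3) by simp
    then show ?thesis
      using stats True by (simp add: gamma_weight_def ac_simps)
  qed (use stats in \<open>simp add: gamma_weight_def\<close>)
qed

lemma gamma_weight_glue_right_empty:
  assumes "\<sigma> permutes {1..a}" "\<tau> permutes {1..0}" "1 \<le> a"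
  shows "gamma_weight t q (a+1) (glue a 0 \<sigma> \<tau>) = 0"
  using dd_glue[OF assms(1,2)] assms(3) by (simp add: gamma_weight_def)

lemma gamma_weight_glue:
  fixes t q :: "'a::comm_ring_1"
  assumes \<sigma>: "\<sigma> permutes {1..a}" and \<tau>: "\<tau> permutes {1..b}" and "1 \<le> a" "1 \<le> b"
  shows "gamma_weight t q (a+b+1) (glue a b \<sigma> \<tau>) =
    t * q ^ (a * b + a) * (gamma_weight t q a \<sigma> * gamma_weight t q b \<tau>)"
proof (cases "dd a \<sigma> = 0 \<and> dd b \<tau> = 0")
  case True
  have "2 * des a \<sigma> \<le> a - 1" "2 * des b \<tau> \<le> b - 1"
    using twice_des_le_of_dd_eq_0[OF \<sigma>] twice_des_le_of_dd_eq_0[OF \<tau>] True by simp_all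
  then have "a + b + 1 - 1 - 2 * (des a \<sigma> + des b \<tau> + 1) =
      (a - 1 - 2 * des a \<sigma>) + (b - 1 - 2 * des b \<tau>)"
    using assms(3,4) by simp
  then show ?thesis
    using True assms(3,4) des_glue[OF \<sigma> \<tau>] adi_glue[OF \<sigma> \<tau>] dd_glue[OF \<sigma> \<tau>]
    by (simp add: gamma_weight_def power_add ac_simps)
next
  case False
  then show ?thesis
    using dd_glue[OF \<sigma> \<tau>] by (auto simp: gamma_weight_def)
qed

lemma gamma_poly_Suc_term:
  fixes t q :: "'a::comm_ring_1"
  assumes "a \<le> n" "1 \<le> n"
  shows "(\<Sum>\<sigma>\<in>avoiders213 a. \<Sum>\<tau>\<in>avoiders213 (n - a). gamma_weight t q (Suc n) (glue a (n - a) \<sigma> \<tau>)) =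
    (if a = 0 then (1 + t) * gamma_poly t q n else if a = n then 0
     else t * q ^ (a * (n - a) + a) * (gamma_poly t q a * gamma_poly t q (n - a)))"
proof -
  have n: "Suc n = a + (n - a) + 1"
    using assms by simp
  consider "a = 0" | "a = n" | "1 \<le> a" "a < n"
    using assms by linarith
  then show ?thesis
  proof cases
    case 1
    have "gamma_weight t q (Suc n) (glue 0 n id \<tau>) = (1 + t) * gamma_weight t q n \<tau>"
      if "\<tau> \<in> avoiders213 n" for \<tau>
      using gamma_weight_glue_left_empty[of id \<tau> n t q] that assms(2) by (simp add: avoiders_def)
    then show ?thesis
      unfolding 1 avoiders213_0 gamma_poly_def by (simp add: sum_distrib_left)
  next
    case 2
    have "gamma_weight t q (Suc n) (glue n 0 \<sigma> \<tau>) = 0"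
      if "\<sigma> \<in> avoiders213 n" "\<tau> \<in> avoiders213 0" for \<sigma> \<tau>
      using gamma_weight_glue_right_empty[of \<sigma> n \<tau> t q] that assms(2) by (simp add: avoiders_def)
    then show ?thesis
      using 2 assms(2) by simp
  next
    case 3
    have "(\<Sum>\<sigma>\<in>avoiders213 a. \<Sum>\<tau>\<in>avoiders213 (n - a). gamma_weight t q (Suc n) (glue a (n - a) \<sigma> \<tau>)) =
        (\<Sum>\<sigma>\<in>avoiders213 a. \<Sum>\<tau>\<in>avoiders213 (n - a).
          t * q ^ (a * (n - a) + a) * (gamma_weight t q a \<sigma> * gamma_weight t q (n - a) \<tau>))"
      unfolding n using gamma_weight_glue[of _ a _ "n - a" t q] 3
      by (intro sum.cong refl) (simp add: avoiders_def)
    also have "\<dots> = t * q ^ (a * (n - a) + a) * (gamma_poly t q a * gamma_poly t q (n - a))"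
      unfolding gamma_poly_def by (rule sum_sum_scaled_product)
    finally show ?thesis
      using 3 by simp
  qed
qed

lemma gamma_poly_1: "gamma_poly t q (Suc 0) = 1"
proof -
  have id: "id permutes {1..0::nat}"
    by simp
  have "gamma_poly t q (Suc 0) = (\<Sum>\<sigma>\<in>avoiders213 0. \<Sum>\<tau>\<in>avoiders213 0.
      gamma_weight t q (0+0+1) (glue 0 0 \<sigma> \<tau>))"
    unfolding gamma_poly_def sum_avoiders213_Suc by simp
  also have "\<dots> = gamma_weight t q (0+0+1) (glue 0 0 id id)"
    unfolding avoiders213_0 by simp
  also have "\<dots> = 1"
    using des_glue[OF id id] adi_glue[OF id id] dd_glue[OF id id] by (simp add: gamma_weight_def)
  finally show ?thesis .
qed

lemma gamma_poly_recurrence: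
  fixes t q :: "'a::comm_ring_1"
  assumes "1 \<le> n"
  shows "gamma_poly t q (Suc n) = (1 + t) * gamma_poly t q n +
    (\<Sum>a\<in>{1..<n}. t * q ^ (a * (n - a) + a) * (gamma_poly t q a * gamma_poly t q (n - a)))"
proof -
  have "gamma_poly t q (Suc n) = (\<Sum>a\<le>n. if a = 0 then (1 + t) * gamma_poly t q n else if a = n then 0
     else t * q ^ (a * (n - a) + a) * (gamma_poly t q a * gamma_poly t q (n - a)))"
    unfolding gamma_poly_def[of t q "Suc n"] sum_avoiders213_Suc
    using gamma_poly_Suc_term[OF _ assms, of _ t q] by (intro sum.cong refl) simp
  also have "\<dots> = (1 + t) * gamma_poly t q n +
    (\<Sum>a\<in>{1..<n}. t * q ^ (a * (n - a) + a) * (gamma_poly t q a * gamma_poly t q (n - a)))"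
    unfolding sum_atMost_split_ends[OF assms] using assms by simp
  finally show ?thesis .
qed

lemma des_adi_poly_eq_gamma_poly:
  fixes t q :: "'a::comm_ring_1"
  shows "des_adi_poly t q n = gamma_poly t q n"
proof (induction n rule: less_induct)
  case (less n)
  consider "n = 0" | "n = 1" | "2 \<le> n"
    by linarith
  then show ?case
  proof cases
    case 1
    then show ?thesis
      by (simp add: des_adi_poly_0 gamma_poly_0)
  next
    case 2
    then show ?thesis
      using des_adi_poly_Suc[of t q 0] by (simp add: des_adi_poly_0 gamma_poly_1)
  next
    case 3
    define m where "m = n - 1"
    have n: "n = Suc m" and m: "1 \<le> m"
      using 3 by (simp_all add: m_def)
    show ?thesis
      unfolding n des_adi_poly_recurrence[OF m] gamma_poly_recurrence[OF m]
      using less.IH n by (intro arg_cong2[where f = "(+)"] sum.cong) auto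
  qed
qed

lemma gamma_poly_eq_sum_tilde213:
  fixes t q :: "'a::comm_ring_1"
  assumes "1 \<le> n"
  shows "gamma_poly t q n =
    (\<Sum>k=0..(n-1) div 2. (\<Sum>p\<in>tilde213 n k. q ^ adi n p) * t ^ k * (1 + t) ^ (n - 1 - 2*k))"
proof -
  let ?S = "{p \<in> avoiders213 n. dd n p = 0}"
  have "(\<Sum>k=0..(n-1) div 2. (\<Sum>p\<in>tilde213 n k. q ^ adi n p) * t ^ k * (1 + t) ^ (n - 1 - 2*k))
      = (\<Sum>k=0..(n-1) div 2. \<Sum>p\<in>{p \<in> ?S. des n p = k}. gamma_weight t q n p)"
  proof (intro sum.cong refl)
    fix k
    have "(\<Sum>p\<in>tilde213 n k. q ^ adi n p) * t ^ k * (1 + t) ^ (n - 1 - 2*k) =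
        (\<Sum>p\<in>tilde213 n k. gamma_weight t q n p)"
      unfolding sum_distrib_right
      by (intro sum.cong refl) (simp add: tilde213_def gamma_weight_def ac_simps)
    moreover have "tilde213 n k = {p \<in> ?S. des n p = k}"
      by (auto simp: tilde213_def)
    ultimately show "(\<Sum>p\<in>tilde213 n k. q ^ adi n p) * t ^ k * (1 + t) ^ (n - 1 - 2*k) =
        (\<Sum>p\<in>{p \<in> ?S. des n p = k}. gamma_weight t q n p)"
      by simp
  qed
  also have "\<dots> = (\<Sum>p\<in>?S. gamma_weight t q n p)"
  proof (rule sum.group)
    show "des n ` ?S \<subseteq> {0..(n-1) div 2}"
      using twice_des_le_of_dd_eq_0 by (fastforce simp: avoiders_def)
  qed (simp_all add: finite_avoiders)
  also have "\<dots> = gamma_poly t q n"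
    unfolding gamma_poly_def
    by (rule sum.mono_neutral_left) (auto simp: finite_avoiders gamma_weight_def)
  finally show ?thesis
    by simp
qed

lemma sum_avoiders132_reverse_complement:
  "(\<Sum>p\<in>avoiders n [1,3,2]. f p) = (\<Sum>p\<in>avoiders213 n. f (reverse_complement n p))"
proof (rule sum.reindex_bij_witness[where i = "reverse_complement n" and j = "reverse_complement n"])
  fix p
  show "reverse_complement n p \<in> avoiders213 n" if "p \<in> avoiders n [1,3,2]"
    using that reverse_complement_avoiders_iff[of n "reverse_complement n p"] by simp
  show "reverse_complement n p \<in> avoiders n [1,3,2]" if "p \<in> avoiders213 n"
    using that reverse_complement_avoiders_iff[of n p] by simp
qed simp_all

lemma des_adi_star_poly_eq_des_adi_poly:
  "(\<Sum>p\<in>avoiders n [1,3,2]. t ^ des n p * q ^ adi_star n p) = des_adi_poly t q n"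
  unfolding sum_avoiders132_reverse_complement des_adi_poly_def
  by (intro sum.cong refl)
    (simp add: avoiders_def des_reverse_complement adi_star_reverse_complement)

lemma sum_tilde132_eq_sum_tilde213:
  "(\<Sum>p\<in>tilde132 n k. q ^ adi_star n p) = (\<Sum>p\<in>tilde213 n k. q ^ adi n p)"
proof (rule sum.reindex_bij_witness[where i = "reverse_complement n" and j = "reverse_complement n"])
  fix p
  assume "p \<in> tilde132 n k"
  then have p: "reverse_complement n p \<in> avoiders213 n" "dd_star n p = 0" "des n p = k"
    using reverse_complement_avoiders_iff[of n "reverse_complement n p"]
    by (simp_all add: tilde132_def)
  then have perm: "reverse_complement n p permutes {1..n}"
    by (simp add: avoiders_def)
  show "reverse_complement n p \<in> tilde213 n k"
    using p des_reverse_complement[OF perm] dd_star_reverse_complement[OF perm]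
    by (simp add: tilde213_def)
  show "q ^ adi n (reverse_complement n p) = q ^ adi_star n p"
    using adi_star_reverse_complement[OF perm] by simp
next
  fix p
  assume "p \<in> tilde213 n k"
  then have p: "p \<in> avoiders213 n" "dd n p = 0" "des n p = k"
    by (simp_all add: tilde213_def)
  then have perm: "p permutes {1..n}"
    by (simp add: avoiders_def)
  show "reverse_complement n p \<in> tilde132 n k"
    using p reverse_complement_avoiders_iff[of n p] des_reverse_complement[OF perm]
      dd_star_reverse_complement[OF perm] by (simp add: tilde132_def)
qed simp_all

theorem theorem1p3:
  fixes n :: nat and t q :: "'a :: comm_ring_1"
  assumes "n \<ge> 1"
  shows "(\<Sum>p\<in>avoiders n [2,1,3]. t ^ des n p * q ^ adi n p)
           = (\<Sum>p\<in>avoiders n [1,3,2]. t ^ des n p * q ^ adi_star n p)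
       \<and> (\<Sum>p\<in>avoiders n [1,3,2]. t ^ des n p * q ^ adi_star n p)
           = (\<Sum>k=0..(n-1) div 2. (\<Sum>p\<in>tilde213 n k. q ^ adi n p) * t ^ k * (1 + t) ^ (n - 1 - 2*k))
       \<and> (\<Sum>k=0..(n-1) div 2. (\<Sum>p\<in>tilde213 n k. q ^ adi n p) * t ^ k * (1 + t) ^ (n - 1 - 2*k))
           = (\<Sum>k=0..(n-1) div 2. (\<Sum>p\<in>tilde132 n k. q ^ adi_star n p) * t ^ k * (1 + t) ^ (n - 1 - 2*k))"
  using des_adi_star_poly_eq_des_adi_poly[where n = n and t = t and q = q]
    des_adi_poly_eq_gamma_poly[where n = n and t = t and q = q]
    gamma_poly_eq_sum_tilde213[OF assms, where t = t and q = q]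
    sum_tilde132_eq_sum_tilde213[where n = n and q = q]
  by (simp add: des_adi_poly_def)

end
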